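(* If $f:(\Sigma+\mathbb A)^*\to(\Gamma+\mathbb A)^*$ is atom-oblivious, then it has a unique deatomization.
   Context: $\Sigma,\Gamma$ finite alphabets, $\mathbb A$ an infinite set of atoms. $f$ is atom-oblivious if $f(\pi(w))=\pi(f(w))$ for every string $w$ and every (not necessarily bijective) function $\pi:\mathbb A\to\mathbb A$, extended letterwise (identity on letters of $\Sigma,\Gamma$). An atom representation is an injective map $\alpha$ from $\mathbb A$ to atom blocks $\langle a^n\rangle$, $n\ge0$, with $\langle,\rangle,a$ fresh letters, extended letterwise to strings. A deatomization of $f$ is a function $\tilde f$ from strings that are concatenations of letters of $\Sigma$ and atom blocks to strings that are concatenations of letters of $\Gamma$ and atom blocks, such that $\tilde f(\alpha(w))=\alpha(f(w))$ for every $w\in(\Sigma+\mathbb A)^*$ and every atom representation $\alpha$. *)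

theory Defs
  imports Main "HOL-Library.Countable_Set"
begin

text \<open>Strings over \<Sigma>+A are lists of type ('s + 'a) list, letters of \<Sigma> being Inl,
atoms being Inr.  The fresh letters for atom blocks are the constructors of mk.\<close>

datatype mk = LAngle | RAngle | ALetter

definition atom_oblivious :: "(('s + 'a) list \<Rightarrow> ('g + 'a) list) \<Rightarrow> bool" where
  "atom_oblivious f \<longleftrightarrow>
     (\<forall>(\<pi> :: 'a \<Rightarrow> 'a) w. f (map (map_sum id \<pi>) w) = map (map_sum id \<pi>) (f w))"

definition atom_block :: "nat \<Rightarrow> ('c + mk) list" where
  "atom_block n = [Inr LAngle] @ replicate n (Inr ALetter) @ [Inr RAngle]"

definition blocks_str :: "('c + nat) list \<Rightarrow> ('c + mk) list" where
  "blocks_str xs = concat (map (\<lambda>x. case x of Inl c \<Rightarrow> [Inl c] | Inr n \<Rightarrow> atom_block n) xs)"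

definition block_strings :: "('c + mk) list set" where
  "block_strings = range blocks_str"

text \<open>An atom representation is an injective map from atoms to atom blocks;
an atom block is determined by its length n, so we represent it by n.\<close>
definition atom_rep :: "('a \<Rightarrow> nat) \<Rightarrow> bool" where
  "atom_rep \<alpha> \<longleftrightarrow> inj \<alpha>"

definition rep_str :: "('a \<Rightarrow> nat) \<Rightarrow> ('c + 'a) list \<Rightarrow> ('c + mk) list" where
  "rep_str \<alpha> w = blocks_str (map (map_sum id \<alpha>) w)"

definition deatomization ::
  "(('s + 'a) list \<Rightarrow> ('g + 'a) list) \<Rightarrow> (('s + mk) list \<Rightarrow> ('g + mk) list) \<Rightarrow> bool" where
  "deatomization f tf \<longleftrightarrow>
     (\<forall>x \<in> block_strings. tf x \<in> block_strings) \<and>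
     (\<forall>(\<alpha> :: 'a \<Rightarrow> nat) w. atom_rep \<alpha> \<longrightarrow> tf (rep_str \<alpha> w) = rep_str \<alpha> (f w))"

end

theory Submission
  imports Defs
begin

text \<open>Fix a bijection \<open>e\<close> between the atoms and \<open>\<nat>\<close>. Since the block encoding is uniquely
decodable, every string of letters and atom blocks is \<open>rep_str e w\<close> for exactly one \<open>w\<close>, which
forces uniqueness and suggests the candidate \<open>rep_str e w \<mapsto> rep_str e (f w)\<close>. Any
representation \<open>\<alpha>\<close> factors as \<open>e \<circ> \<pi>\<close> with \<open>\<pi> = inv e \<circ> \<alpha>\<close>, and atom-obliviousness for
\<open>\<pi>\<close> shows that the candidate commutes with \<open>\<alpha>\<close> as well.\<close>

lemma blocks_str_Nil [simp]: "blocks_str [] = []"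
  by (simp add: blocks_str_def)

lemma blocks_str_Cons:
  "blocks_str (x # xs) = (case x of Inl c \<Rightarrow> [Inl c] | Inr n \<Rightarrow> atom_block n) @ blocks_str xs"
  by (simp add: blocks_str_def)

lemma replicate_append_Cons_eq:
  assumes "a \<noteq> b" "replicate n a @ b # xs = replicate m a @ b # ys"
  shows "n = m \<and> xs = ys"
  using assms(2)
proof (induction n arbitrary: m)
  case 0 then show ?case using assms(1) by (cases m) auto
next
  case (Suc n) then show ?case using assms(1) by (cases m) auto
qed

lemma blocks_str_Cons_eq:
  fixes xs ys :: "('c + nat) list"
  assumes "blocks_str (x # xs) = blocks_str (y # ys)"
  shows "x = y \<and> blocks_str xs = blocks_str ys"
proof (cases x)
  case (Inl c)
  then show ?thesis
    using assms by (cases y) (simp_all add: blocks_str_Cons atom_block_def)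
next
  case (Inr n)
  show ?thesis
  proof (cases y)
    case (Inl d)
    then show ?thesis using assms Inr by (simp add: blocks_str_Cons atom_block_def)
  next
    case (Inr m)
    have "replicate n (Inr ALetter) @ Inr RAngle # blocks_str xs
        = replicate m (Inr ALetter) @ Inr RAngle # blocks_str ys"
      using assms \<open>x = Inr n\<close> Inr by (simp add: blocks_str_Cons atom_block_def)
    then show ?thesis
      using replicate_append_Cons_eq[of "Inr ALetter"] \<open>x = Inr n\<close> Inr by blast
  qed
qed

lemma blocks_str_eq_Nil_iff: "blocks_str xs = [] \<longleftrightarrow> xs = []"
  by (cases xs) (auto simp: blocks_str_Cons atom_block_def split: sum.splits)

lemma inj_blocks_str: "inj blocks_str"
proof (rule injI)
  show "blocks_str xs = blocks_str ys \<Longrightarrow> xs = ys" for xs ys :: "('c + nat) list"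
  proof (induction xs arbitrary: ys)
    case Nil
    then show ?case by (metis blocks_str_Nil blocks_str_eq_Nil_iff)
  next
    case (Cons x xs)
    then obtain y ys' where "ys = y # ys'"
      by (metis blocks_str_eq_Nil_iff list.exhaust)
    with Cons show ?case
      using blocks_str_Cons_eq by blast
  qed
qed

lemma rep_str_comp: "rep_str (e \<circ> \<pi>) w = rep_str e (map (map_sum id \<pi>) w)"
  by (simp add: rep_str_def sum.map_comp map_sum.comp)

lemma inj_rep_str:
  assumes "inj e"
  shows "inj (rep_str e)"
proof -
  have "inj (map_sum id e :: 'c + 'a \<Rightarrow> 'c + nat)"
    using assms by (simp add: sum.inj_map)
  moreover have "rep_str e = blocks_str \<circ> map (map_sum id e)"
    by (simp add: fun_eq_iff rep_str_def)
  ultimately show ?thesis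
    using inj_compose[OF inj_blocks_str inj_mapI] by metis
qed

lemma block_strings_eq_range_rep_str:
  fixes e :: "'a \<Rightarrow> nat"
  assumes "surj e"
  shows "block_strings = range (rep_str e :: ('c + 'a) list \<Rightarrow> ('c + mk) list)"
proof
  show "range (rep_str e) \<subseteq> block_strings"
    by (auto simp: block_strings_def rep_str_def)
next
  have inv: "map_sum id e (map_sum id (inv e) z) = z" for z :: "'c + nat"
    using assms by (cases z) (simp_all add: surj_f_inv_f)
  have decode: "blocks_str ys = rep_str e (map (map_sum id (inv e)) ys)" for ys :: "('c + nat) list"
    unfolding rep_str_def map_map by (simp add: comp_def inv)
  show "block_strings \<subseteq> range (rep_str e :: ('c + 'a) list \<Rightarrow> _)"
  proof
    fix x :: "('c + mk) list"
    assume "x \<in> block_strings"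
    then obtain ys where "x = blocks_str ys"
      by (auto simp: block_strings_def)
    then show "x \<in> range (rep_str e :: ('c + 'a) list \<Rightarrow> _)"
      by (metis decode rangeI)
  qed
qed

lemma atom_oblivious_rep_str:
  assumes "atom_oblivious f"
  shows "rep_str e (f (map (map_sum id \<pi>) w)) = rep_str (e \<circ> \<pi>) (f w)"
  using assms by (simp add: atom_oblivious_def rep_str_comp)

lemma deatomization_via_bij:
  fixes f :: "('s + 'a) list \<Rightarrow> ('g + 'a) list" and e :: "'a \<Rightarrow> nat"
  assumes "atom_oblivious f" and "bij e"
  shows "deatomization f (\<lambda>x. rep_str e (f (the_inv (rep_str e) x)))"
  unfolding deatomization_def
proof (intro conjI allI impI ballI)
  show "rep_str e (f (the_inv (rep_str e) x)) \<in> block_strings" for x :: "('s + mk) list"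
    by (simp add: block_strings_def rep_str_def)
next
  fix \<alpha> :: "'a \<Rightarrow> nat" and w :: "('s + 'a) list"
  define \<pi> where "\<pi> = inv e \<circ> \<alpha>"
  have \<alpha>: "\<alpha> = e \<circ> \<pi>"
    using assms(2) by (simp add: \<pi>_def fun_eq_iff bij_def surj_f_inv_f)
  have "the_inv (rep_str e) (rep_str \<alpha> w) = map (map_sum id \<pi>) w"
    unfolding \<alpha> rep_str_comp using assms(2) by (simp add: bij_def inj_rep_str the_inv_f_f)
  then show "rep_str e (f (the_inv (rep_str e) (rep_str \<alpha> w))) = rep_str \<alpha> (f w)"
    using atom_oblivious_rep_str[OF assms(1)] by (simp add: \<alpha>)
qed

lemma deatomization_unique:
  fixes f :: "('s + 'a) list \<Rightarrow> ('g + 'a) list"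
  assumes "deatomization f tf1" and "deatomization f tf2"
    and "bij (e :: 'a \<Rightarrow> nat)" and "x \<in> block_strings"
  shows "tf1 x = tf2 x"
proof -
  have "x \<in> range (rep_str e :: ('s + 'a) list \<Rightarrow> _)"
    using assms(3,4) block_strings_eq_range_rep_str[of e] by (auto simp: bij_def)
  then obtain w :: "('s + 'a) list" where "x = rep_str e w"
    by blast
  then show ?thesis
    using assms(1-3) by (simp add: deatomization_def atom_rep_def bij_def)
qed

theorem mainTheorem4:
  fixes f :: "('s + 'a) list \<Rightarrow> ('g + 'a) list"
  assumes "finite (UNIV :: 's set)" and "finite (UNIV :: 'g set)"
    and "infinite (UNIV :: 'a set)" and "countable (UNIV :: 'a set)"
    and "atom_oblivious f"
  shows "(\<exists>tf. deatomization f tf) \<and>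
         (\<forall>tf1 tf2. deatomization f tf1 \<and> deatomization f tf2 \<longrightarrow>
             (\<forall>x \<in> block_strings. tf1 x = tf2 x))"
proof -
  obtain e :: "'a \<Rightarrow> nat" where "bij e"
    using countableE_infinite[OF assms(4,3)] by (auto simp: bij_betw_def bij_def)
  then show ?thesis
    using deatomization_via_bij[OF assms(5)] deatomization_unique by blast
qed

end
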